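(* For every $n\ge1$ and $t\in(0,1)$, the recurrence coefficients satisfy $$(\alpha+\beta+\gamma+2n+2)\alpha_n=2(t-1)r_n-2ty_n-(t-1)R_n+t\alpha+(t-1)\beta+t,$$ and \begin{align*} &(\alpha+\beta+\gamma+2n+1)(\alpha+\beta+\gamma+2n-1)\beta_n\\ &=[ty_n-(t-1)r_n]^2-(t-1)(2nt+\gamma t+\beta)r_n+t[(t-1)(2n+\gamma)-\alpha]y_n+n(n+\gamma)(t^2-t). \end{align*}
   Context: Fix $\alpha,\beta,\gamma>0$ and real constants $A,B$ with $A\ge0$, $A+B\ge0$, not both $A$ and $A+B$ equal to $0$. Let $\theta$ be the Heaviside function. For $t\in(0,1)$ put $w(x)=x^{\alpha}(1-x)^{\beta}|x-t|^{\gamma}(A+B\theta(x-t))$ on $[0,1]$. Let $P_n$ be the monic orthogonal polynomials w.r.t. $w$ on $[0,1]$, $\int_0^1P_mP_nw\,dx=h_n\delta_{mn}$, with recurrence $xP_n=P_{n+1}+\alpha_nP_n+\beta_nP_{n-1}$, $P_0=1$, $\beta_0P_{-1}=0$. Define $R_n=\frac{\beta}{h_n}\int_0^1\frac{P_n^2w}{1-y}dy$, and for $n\ge1$, $y_n=\frac{\alpha}{h_{n-1}}\int_0^1\frac{P_nP_{n-1}w}{y}dy$, $r_n=\frac{\beta}{h_{n-1}}\int_0^1\frac{P_nP_{n-1}w}{1-y}dy$. *)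

theory Defs
  imports "HOL-Analysis.Analysis" "HOL-Computational_Algebra.Polynomial"
begin

text \<open>Heaviside function (its value at 0 is irrelevant: a null set).\<close>
definition heaviside :: "real \<Rightarrow> real" where
  "heaviside x = (if x \<ge> 0 then 1 else 0)"

definition wt :: "real \<Rightarrow> real \<Rightarrow> real \<Rightarrow> real \<Rightarrow> real \<Rightarrow> real \<Rightarrow> real \<Rightarrow> real" where
  "wt alpha beta gamma A B t x =
     x powr alpha * (1 - x) powr beta * \<bar>x - t\<bar> powr gamma * (A + B * heaviside (x - t))"

definition ip :: "(real \<Rightarrow> real) \<Rightarrow> real poly \<Rightarrow> real poly \<Rightarrow> real" where
  "ip w p q = integral {0..1} (\<lambda>x. poly p x * poly q x * w x)"

definition monic_OP :: "(real \<Rightarrow> real) \<Rightarrow> (nat \<Rightarrow> real poly) \<Rightarrow> bool" where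
  "monic_OP w P \<longleftrightarrow> (\<forall>n. degree (P n) = n \<and> lead_coeff (P n) = 1) \<and>
                      (\<forall>m n. m \<noteq> n \<longrightarrow> ip w (P m) (P n) = 0)"

definition hn :: "(real \<Rightarrow> real) \<Rightarrow> (nat \<Rightarrow> real poly) \<Rightarrow> nat \<Rightarrow> real" where
  "hn w P n = ip w (P n) (P n)"

definition Rn :: "real \<Rightarrow> (real \<Rightarrow> real) \<Rightarrow> (nat \<Rightarrow> real poly) \<Rightarrow> nat \<Rightarrow> real" where
  "Rn beta w P n = beta / hn w P n *
     integral {0..1} (\<lambda>y. poly (P n) y ^ 2 * w y / (1 - y))"

definition yn :: "real \<Rightarrow> (real \<Rightarrow> real) \<Rightarrow> (nat \<Rightarrow> real poly) \<Rightarrow> nat \<Rightarrow> real" where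
  "yn alpha w P n = alpha / hn w P (n - 1) *
     integral {0..1} (\<lambda>y. poly (P n) y * poly (P (n - 1)) y * w y / y)"

definition rn :: "real \<Rightarrow> (real \<Rightarrow> real) \<Rightarrow> (nat \<Rightarrow> real poly) \<Rightarrow> nat \<Rightarrow> real" where
  "rn beta w P n = beta / hn w P (n - 1) *
     integral {0..1} (\<lambda>y. poly (P n) y * poly (P (n - 1)) y * w y / (1 - y))"

end

theory Submission
  imports Defs
begin

text \<open>
  Write \<open>M\<close>, \<open>L0\<close>, \<open>L1\<close> for integration of a polynomial against \<open>w\<close>, \<open>w/x\<close>, \<open>w/(1 - x)\<close>.
  Since \<open>w'/w = \<alpha>/x - \<beta>/(1 - x) + \<gamma>/(x - t)\<close> and \<open>w\<close> vanishes at both ends, integrating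
  \<open>((x - t) T w)'\<close> gives \<open>M(((x - t) T)') + \<alpha> L0((x - t) T) - \<beta> L1((x - t) T) + \<gamma> M(T) = 0\<close>.
  With \<open>T = x P\<^sub>n\<^sup>2\<close> and \<open>T = P\<^sub>n P\<^sub>n\<^sub>-\<^sub>1\<close> this yields the identity for \<open>\<alpha>\<^sub>n\<close>.

  For \<open>\<beta>\<^sub>n\<close>: any linear functional \<open>L\<close> with \<open>L((x - c) T) = \<kappa> M(T)\<close> satisfies, by synthetic
  division and orthogonality, \<open>L(P\<^sub>n P\<^sub>n\<^sub>-\<^sub>1)\<^sup>2 - L(P\<^sub>n\<^sup>2) L(P\<^sub>n\<^sub>-\<^sub>1\<^sup>2) = \<kappa> h\<^sub>n\<^sub>-\<^sub>1 L(P\<^sub>n P\<^sub>n\<^sub>-\<^sub>1)\<close>.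
  This applies to \<open>\<alpha> L0\<close> (\<open>c = 0\<close>), \<open>-\<beta> L1\<close> (\<open>c = 1\<close>) and to \<open>\<gamma> \<integral> S w/(x - t)\<close> (\<open>c = t\<close>),
  the last one defined through the integration by parts identity. The three quadratic relations,
  combined with that identity for \<open>T = P\<^sub>k\<^sup>2\<close> and with \<open>\<beta>\<^sub>n h\<^sub>n\<^sub>-\<^sub>1 = h\<^sub>n\<close>, give the identity for \<open>\<beta>\<^sub>n\<close>.
\<close>

definition moment :: "(real \<Rightarrow> real) \<Rightarrow> real poly \<Rightarrow> real" where
  "moment f p = integral {0..1} (\<lambda>x. poly p x * f x)"

lemma moment_add:
  assumes "\<And>p. (\<lambda>x. poly p x * f x) integrable_on {0..1}"
  shows "moment f (p + q) = moment f p + moment f q"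
  unfolding moment_def by (simp add: distrib_right integral_add assms)

lemma moment_smult: "moment f (smult c p) = c * moment f p"
  unfolding moment_def by (simp add: mult.assoc)

lemma degree_linear_times_pderiv_le:
  fixes p :: "'a::{idom,ring_char_0} poly"
  shows "degree ([:-c, 1:] * pderiv p) \<le> degree p"
proof (cases "degree p")
  case 0
  then show ?thesis by (simp add: pderiv_eq_0_iff[THEN iffD2])
next
  case (Suc j)
  have "degree ([:-c, 1:] * pderiv p) \<le> degree [:-c, 1:] + degree (pderiv p)"
    by (rule degree_mult_le)
  with Suc show ?thesis by (simp add: degree_pderiv)
qed

lemma coeff_linear_times_pderiv:
  fixes p :: "'a::{idom,ring_char_0} poly"
  shows "coeff ([:-c, 1:] * pderiv p) (degree p) = of_nat (degree p) * lead_coeff p"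
proof (cases "degree p")
  case 0
  then show ?thesis by (simp add: pderiv_eq_0_iff[THEN iffD2])
next
  case (Suc j)
  then have "coeff (pderiv p) (Suc j) = 0"
    by (simp add: coeff_eq_0 degree_pderiv)
  with Suc show ?thesis by (simp add: coeff_pderiv)
qed

definition euler_defect :: "'a::{idom,ring_char_0} \<Rightarrow> 'a poly \<Rightarrow> 'a poly" where
  "euler_defect c p = [:-c, 1:] * pderiv p - smult (of_nat (degree p)) p"

lemma degree_euler_defect:
  fixes p :: "'a::{idom,ring_char_0} poly"
  assumes "degree p = Suc m"
  shows "degree (euler_defect c p) \<le> m"
proof -
  have "degree (euler_defect c p) \<le> Suc m"
    unfolding euler_defect_def using assms degree_linear_times_pderiv_le[of c p]
    by (intro degree_diff_le) (auto simp: degree_smult_le)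
  moreover have "coeff (euler_defect c p) (Suc m) = 0"
    unfolding euler_defect_def using coeff_linear_times_pderiv[of c p] assms by simp
  ultimately show ?thesis
    by (metis le_SucE leading_coeff_0_iff degree_0 le0)
qed

lemma pderiv_linear_times_mult:
  fixes p q :: "'a::{idom,ring_char_0} poly"
  shows "pderiv ([:-c, 1:] * (p * q))
           = p * q + p * ([:-c, 1:] * pderiv q) + smult (of_nat (degree p)) (p * q) + q * euler_defect c p"
  unfolding euler_defect_def pderiv_mult by (simp add: pderiv_pCons algebra_simps)

lemma pderiv_linear_times_x_sq:
  fixes p :: "'a::{idom,ring_char_0} poly"
  shows "pderiv ([:-c, 1:] * ([:0, 1:] * (p * p)))
           = smult (2 + 2 * of_nat (degree p)) ([:0, 1:] * (p * p)) - smult c (p * p)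
             + smult 2 (p * ([:0, 1:] * euler_defect c p))"
  unfolding euler_defect_def
  by (rule poly_ext) (simp add: pderiv_mult pderiv_pCons pderiv_smult pderiv_diff algebra_simps)

lemma lead_coeff_synthetic_div:
  fixes p :: "'a::{idom,ring_char_0} poly"
  assumes "degree p = Suc m"
  shows "coeff (synthetic_div p c) m = lead_coeff p"
proof -
  have d: "degree (synthetic_div p c) = m"
    using assms by (simp add: degree_synthetic_div)
  have "lead_coeff p = coeff ([:-c, 1:] * synthetic_div p c + [:poly p c:]) (Suc m)"
    by (simp only: synthetic_div_correct' assms)
  also have "\<dots> = coeff (synthetic_div p c) m"
    using d by (simp add: coeff_eq_0)
  finally show ?thesis ..
qed

lemma integral_poly_sq_weight_pos:
  fixes w :: "real \<Rightarrow> real" and p :: "real poly"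
  assumes w_cont: "continuous_on {a..b} w" and w_nonneg: "\<And>x. x \<in> {a..b} \<Longrightarrow> 0 \<le> w x"
    and ac: "a \<le> c" and cd: "c < d" and db: "d \<le> b" and w_pos: "\<And>x. x \<in> {c<..<d} \<Longrightarrow> 0 < w x"
    and "p \<noteq> 0"
  shows "0 < integral {a..b} (\<lambda>x. poly p x * poly p x * w x)"
proof -
  let ?f = "\<lambda>x. poly p x * poly p x * w x"
  have f_cont: "continuous_on {a..b} ?f"
    by (intro continuous_intros w_cont)
  have f_nonneg: "\<And>x. x \<in> {a..b} \<Longrightarrow> 0 \<le> ?f x"
    using w_nonneg by simp
  have "integral {a..b} ?f \<noteq> 0"
  proof
    assume "integral {a..b} ?f = 0"
    then have "(?f has_integral 0) (cbox a b)"
      using integrable_continuous_interval[OF f_cont] by (metis cbox_interval has_integral_integral)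
    then have "?f x = 0" if "x \<in> {c<..<d}" for x
      using has_integral_0_cbox_imp_0[of a b ?f x] that ac cd db f_cont f_nonneg by auto
    then have "{c<..<d} \<subseteq> {x. poly p x = 0}"
      using w_pos by fastforce
    then have "finite {c<..<d}"
      using poly_roots_finite[OF \<open>p \<noteq> 0\<close>] by (rule finite_subset)
    with cd show False using infinite_Ioo by blast
  qed
  moreover have "0 \<le> integral {a..b} ?f"
    using integrable_continuous_interval[OF f_cont] f_nonneg by (rule integral_nonneg)
  ultimately show ?thesis by simp
qed

lemma integrable_on_continuous_times_absolutely_integrable:
  fixes g h :: "real \<Rightarrow> real"
  assumes "continuous_on {a..b} g" "h absolutely_integrable_on {a..b}"
  shows "(\<lambda>x. g x * h x) integrable_on {a..b}"
proof -
  have "g \<in> borel_measurable (lebesgue_on {a..b})" "bounded (g ` {a..b})"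
    using assms(1)
    by (auto intro: continuous_imp_measurable_on_sets_lebesgue compact_imp_bounded compact_continuous_image)
  then have "(\<lambda>x. g x * h x) absolutely_integrable_on {a..b}"
    using assms(2) by (intro absolutely_integrable_bounded_measurable_product_real) auto
  then show ?thesis
    by (simp add: absolutely_integrable_on_def)
qed

lemma absolutely_integrable_one_minus_powr:
  fixes b :: real
  assumes "0 < b"
  shows "(\<lambda>x. (1 - x) powr (b - 1)) absolutely_integrable_on {0..1}"
proof (intro nonnegative_absolutely_integrable_1)
  have "((\<lambda>x. (1 - x) powr (b - 1)) has_integral
      (- ((1 - 1) powr b / b)) - (- ((1 - 0) powr b / b))) {0..1}"
  proof (rule fundamental_theorem_of_calculus_interior)
    show "continuous_on {0..1} (\<lambda>x. - ((1 - x) powr b / b))"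
      using assms by (intro continuous_intros continuous_on_powr') auto
    show "((\<lambda>x. - ((1 - x) powr b / b)) has_vector_derivative (1 - x) powr (b - 1)) (at x)"
      if "x \<in> {0<..<1}" for x
      unfolding has_real_derivative_iff_has_vector_derivative[symmetric]
      using that assms by (auto intro!: derivative_eq_intros)
  qed simp
  then show "(\<lambda>x. (1 - x) powr (b - 1)) integrable_on {0..1}"
    by blast
qed auto

lemma powr_product_log_deriv:
  fixes a b c K s t x :: real
  assumes "0 < x" "x < 1" "0 < s * (x - t)"
  shows "((\<lambda>y. K * y powr a * (1 - y) powr b * (s * (y - t)) powr c) has_field_derivative
           K * x powr a * (1 - x) powr b * (s * (x - t)) powr c * (a / x - b / (1 - x) + c / (x - t))) (at x)"
proof -
  have st: "s * x - s * t > 0" "s * x - s * t \<noteq> 0" "x - t \<noteq> 0" using assms by (auto simp: algebra_simps)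
  have d1: "((\<lambda>y. y powr a) has_field_derivative x powr a * (a / x)) (at x)"
    using assms by (auto intro!: derivative_eq_intros simp: powr_diff field_simps)
  have d2: "((\<lambda>y. (1 - y) powr b) has_field_derivative (1 - x) powr b * (- b / (1 - x))) (at x)"
    using assms by (auto intro!: derivative_eq_intros simp: powr_diff field_simps)
  have d3: "((\<lambda>y. (s * (y - t)) powr c) has_field_derivative (s * (x - t)) powr c * (c / (x - t))) (at x)"
    using assms st by (auto intro!: derivative_eq_intros simp: powr_diff field_simps)
  from DERIV_cmult[OF DERIV_mult[OF DERIV_mult[OF d1 d2] d3], of K]
  show ?thesis
    by (simp add: algebra_simps)
qed

section \<open>Orthogonal polynomials for an abstract moment functional\<close>

locale orthogonal_poly_system =
  fixes M :: "real poly \<Rightarrow> real" and P :: "nat \<Rightarrow> real poly"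
  assumes M_add: "M (p + q) = M p + M q"
    and M_smult: "M (smult c p) = c * M p"
    and degree_P: "degree (P n) = n"
    and lead_coeff_P: "lead_coeff (P n) = 1"
    and orthogonal: "m \<noteq> n \<Longrightarrow> M (P m * P n) = 0"
begin

definition sqnorm :: "nat \<Rightarrow> real" where
  "sqnorm n = M (P n * P n)"

lemma M_0: "M 0 = 0"
  using M_smult[of 0 0] by simp

lemma M_diff: "M (p - q) = M p - M q"
  using M_add[of "p - q" q] by simp

lemma coeff_P: "coeff (P n) n = 1"
  using lead_coeff_P[of n] by (simp add: degree_P)

lemma P_nonzero: "P n \<noteq> 0"
  using coeff_P[of n] by auto

lemma degree_cancel_P:
  assumes "degree S \<le> d"
  shows "S - smult (coeff S d) (P d) = 0 \<or> degree (S - smult (coeff S d) (P d)) < d"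
proof -
  let ?S' = "S - smult (coeff S d) (P d)"
  have "degree ?S' \<le> d"
    using assms degree_P[of d] by (intro degree_diff_le) (auto simp: degree_smult_le)
  moreover have "coeff ?S' d = 0"
    using coeff_P[of d] by simp
  ultimately show ?thesis
    by (metis le_neq_implies_less leading_coeff_0_iff)
qed

lemma M_P_mult_lower_degree:
  assumes "S = 0 \<or> degree S < k"
  shows "M (P k * S) = 0"
  using assms
proof (induction "degree S" arbitrary: S rule: less_induct)
  case less
  show ?case
  proof (cases "S = 0")
    case True
    then show ?thesis by (simp add: M_0)
  next
    case False
    define d where "d = degree S"
    define S' where "S' = S - smult (coeff S d) (P d)"
    have "d < k"
      using less.prems False d_def by auto
    have "S' = 0 \<or> degree S' < d"
      unfolding S'_def using degree_cancel_P d_def by simp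
    have "M (P k * S') = 0"
    proof (cases "S' = 0")
      case True
      then show ?thesis by (simp add: M_0)
    next
      case False
      with \<open>S' = 0 \<or> degree S' < d\<close> have "degree S' < d" by simp
      with less.hyps[of S'] \<open>d < k\<close> d_def show ?thesis by simp
    qed
    moreover have "M (P k * P d) = 0"
      using orthogonal \<open>d < k\<close> by simp
    moreover have "P k * S = P k * S' + smult (coeff S d) (P k * P d)"
      unfolding S'_def by (simp add: algebra_simps)
    ultimately show ?thesis
      by (simp add: M_add M_smult)
  qed
qed

lemma M_P_mult_degree_le:
  assumes "degree S \<le> k"
  shows "M (P k * S) = coeff S k * sqnorm k"
proof -
  have "P k * S = P k * (S - smult (coeff S k) (P k)) + smult (coeff S k) (P k * P k)"
    by (simp add: algebra_simps)
  then show ?thesis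
    using M_P_mult_lower_degree[OF degree_cancel_P[OF assms]]
    by (simp add: M_add M_smult sqnorm_def)
qed

lemma quotient_functional_quadratic:
  fixes L :: "real poly \<Rightarrow> real"
  assumes L_add: "\<And>S T. L (S + T) = L S + L T"
    and L_smult: "\<And>a S. L (smult a S) = a * L S"
    and L_quotient: "\<And>T. L ([:-c, 1:] * T) = \<kappa> * M T"
  shows "L (P (Suc m) * P m) ^ 2 - L (P (Suc m) * P (Suc m)) * L (P m * P m)
           = \<kappa> * sqnorm m * L (P (Suc m) * P m)"
proof -
  have split: "L (X * Y) = \<kappa> * M (X * synthetic_div Y c) + poly Y c * L X" for X Y
  proof -
    have "X * Y = [:-c, 1:] * (X * synthetic_div Y c) + smult (poly Y c) X"
      by (subst (1) synthetic_div_correct'[of c Y, symmetric]) (simp add: algebra_simps)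
    then show ?thesis by (simp only: L_add L_smult L_quotient)
  qed
  let ?p = "P (Suc m)" and ?q = "P m"
  have low_p: "synthetic_div ?p c = 0 \<or> degree (synthetic_div ?p c) < Suc m"
    by (simp add: degree_synthetic_div degree_P)
  have low_q: "synthetic_div ?q c = 0 \<or> degree (synthetic_div ?q c) < m"
    by (cases m) (auto simp: degree_synthetic_div degree_P synthetic_div_eq_0_iff)
  have "M (?q * synthetic_div ?p c) = sqnorm m"
    using M_P_mult_degree_le[of "synthetic_div ?p c" m] lead_coeff_synthetic_div[of ?p m c]
    by (simp add: degree_synthetic_div degree_P coeff_P)
  then have pq: "L (?p * ?q) = \<kappa> * sqnorm m + poly ?p c * L ?q"
    using split[of ?q ?p] by (simp add: mult.commute)
  have qp: "L (?p * ?q) = poly ?q c * L ?p"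
    using split[of ?p ?q] M_P_mult_lower_degree low_q by auto
  have pp: "L (?p * ?p) = poly ?p c * L ?p"
    using split[of ?p ?p] M_P_mult_lower_degree[OF low_p] by simp
  have qq: "L (?q * ?q) = poly ?q c * L ?q"
    using split[of ?q ?q] M_P_mult_lower_degree[OF low_q] by simp
  have "L (?p * ?q) ^ 2 = (\<kappa> * sqnorm m + poly ?p c * L ?q) * (poly ?q c * L ?p)"
    unfolding power2_eq_square by (subst (1) pq, subst qp) (rule refl)
  then show ?thesis
    unfolding pp qq qp by (simp add: algebra_simps)
qed

lemma M_P_x_P:
  assumes "[:0, 1:] * P (Suc m) = P (Suc (Suc m)) + smult an (P (Suc m)) + smult bn (P m)"
  shows "M (P (Suc m) * ([:0, 1:] * P (Suc m))) = an * sqnorm (Suc m)"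
  unfolding assms using orthogonal[of "Suc m" "Suc (Suc m)"] orthogonal[of "Suc m" m]
  by (simp add: distrib_left M_add M_smult sqnorm_def)

lemma recurrence_sqnorm:
  assumes "[:0, 1:] * P (Suc m) = P (Suc (Suc m)) + smult an (P (Suc m)) + smult bn (P m)"
  shows "bn * sqnorm m = sqnorm (Suc m)"
proof -
  have "M (P m * ([:0, 1:] * P (Suc m))) = bn * sqnorm m"
    unfolding assms using orthogonal[of m "Suc (Suc m)"] orthogonal[of m "Suc m"]
    by (simp add: distrib_left M_add M_smult sqnorm_def)
  moreover have "M (P (Suc m) * ([:0, 1:] * P m)) = sqnorm (Suc m)"
    using M_P_mult_degree_le[of "[:0, 1:] * P m" "Suc m"] coeff_P[of m] degree_P[of m]
    by (simp add: degree_pCons_le)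
  moreover have "P m * ([:0, 1:] * P (Suc m)) = P (Suc m) * ([:0, 1:] * P m)"
    by (simp add: algebra_simps)
  ultimately show ?thesis by metis
qed

lemma M_pderiv_P_sq: "M (pderiv (P k * P k)) = 0"
proof -
  have "pderiv (P k * P k) = smult 2 (P k * pderiv (P k))"
    by (simp add: pderiv_mult poly_eq_poly_eq_iff[symmetric] fun_eq_iff)
  moreover have "M (P k * pderiv (P k)) = 0"
    by (rule M_P_mult_lower_degree) (cases k, auto simp: degree_pderiv degree_P pderiv_eq_0_iff)
  ultimately show ?thesis by (simp add: M_smult)
qed

lemma M_pderiv_P_P_pred: "M (pderiv (P (Suc m) * P m)) = real (Suc m) * sqnorm m"
proof -
  have "M (P (Suc m) * pderiv (P m)) = 0"
    by (rule M_P_mult_lower_degree) (cases m, auto simp: degree_pderiv degree_P pderiv_eq_0_iff)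
  moreover have "M (P m * pderiv (P (Suc m))) = real (Suc m) * sqnorm m"
    using M_P_mult_degree_le[of "pderiv (P (Suc m))" m] coeff_P[of "Suc m"]
    by (simp add: degree_pderiv degree_P coeff_pderiv)
  ultimately show ?thesis
    by (simp add: pderiv_mult M_add)
qed

lemma M_P_linear_times_pderiv_P: "M (P k * ([:-c, 1:] * pderiv (P k))) = real k * sqnorm k"
  using M_P_mult_degree_le degree_linear_times_pderiv_le[of c "P k"]
    coeff_linear_times_pderiv[of c "P k"] by (simp add: degree_P coeff_P)

end

section \<open>The weight and integration by parts\<close>

locale jump_weight =
  fixes alpha beta gamma A B t :: real
  assumes alpha_pos: "0 < alpha" and beta_pos: "0 < beta" and gamma_pos: "0 < gamma"
    and A_nonneg: "0 \<le> A" and A_B_nonneg: "0 \<le> A + B" and A_B_nonzero: "\<not> (A = 0 \<and> A + B = 0)"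
    and t_pos: "0 < t" and t_less_1: "t < 1"
begin

abbreviation w :: "real \<Rightarrow> real" where
  "w \<equiv> wt alpha beta gamma A B t"

abbreviation M :: "real poly \<Rightarrow> real" where
  "M \<equiv> moment w"

abbreviation L0 :: "real poly \<Rightarrow> real" where
  "L0 \<equiv> moment (\<lambda>x. w x / x)"

abbreviation L1 :: "real poly \<Rightarrow> real" where
  "L1 \<equiv> moment (\<lambda>x. w x / (1 - x))"

definition jump_factor :: "real \<Rightarrow> real" where
  "jump_factor x = A * \<bar>x - t\<bar> powr gamma + B * max (x - t) 0 powr gamma"

lemma wt_eq: "w x = x powr alpha * (1 - x) powr beta * jump_factor x"
  unfolding wt_def jump_factor_def heaviside_def by (cases "t \<le> x") (auto simp: algebra_simps)

lemma continuous_on_jump_factor: "continuous_on S jump_factor"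
  unfolding jump_factor_def using gamma_pos by (intro continuous_intros continuous_on_powr') auto

lemma continuous_on_powr_alpha: "continuous_on {0..1} (\<lambda>x::real. x powr alpha)"
  using alpha_pos by (intro continuous_intros continuous_on_powr') auto

lemma continuous_on_powr_beta: "continuous_on {0..1} (\<lambda>x::real. (1 - x) powr beta)"
  using beta_pos by (intro continuous_intros continuous_on_powr') auto

lemma continuous_on_wt: "continuous_on {0..1} w"
  unfolding wt_eq
  by (intro continuous_on_mult continuous_on_powr_alpha continuous_on_powr_beta continuous_on_jump_factor)

lemma wt_nonneg: "0 \<le> w x"
  unfolding wt_def heaviside_def using A_nonneg A_B_nonneg by (auto intro!: mult_nonneg_nonneg)

lemma wt_0: "w 0 = 0" and wt_1: "w 1 = 0"
  using alpha_pos beta_pos by (auto simp: wt_eq)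

lemma integrable_M: "(\<lambda>x. poly p x * w x) integrable_on {0..1}"
  by (intro integrable_continuous_interval continuous_intros continuous_on_wt)

lemma integrable_L0: "(\<lambda>x. poly p x * (w x / x)) integrable_on {0..1}"
proof -
  have "continuous_on {0..1} (\<lambda>x. poly p x * (1 - x) powr beta * jump_factor x)"
    by (intro continuous_on_mult continuous_on_powr_beta continuous_on_jump_factor
        continuous_on_poly continuous_on_id)
  moreover have "(\<lambda>x. x powr (alpha - 1)) absolutely_integrable_on {0..1}"
    using alpha_pos by (intro nonnegative_absolutely_integrable_1 integrable_on_powr_from_0) auto
  ultimately have "(\<lambda>x. poly p x * (1 - x) powr beta * jump_factor x * x powr (alpha - 1))
      integrable_on {0..1}"
    by (rule integrable_on_continuous_times_absolutely_integrable)
  then show ?thesis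
  proof (rule integrable_eq)
    show "poly p x * (1 - x) powr beta * jump_factor x * x powr (alpha - 1) = poly p x * (w x / x)"
      if "x \<in> {0..1}" for x
    proof (cases "x = 0")
      case False
      with that show ?thesis by (simp add: wt_eq powr_diff)
    qed simp
  qed
qed

lemma integrable_L1: "(\<lambda>x. poly p x * (w x / (1 - x))) integrable_on {0..1}"
proof -
  have "continuous_on {0..1} (\<lambda>x. poly p x * x powr alpha * jump_factor x)"
    by (intro continuous_on_mult continuous_on_powr_alpha continuous_on_jump_factor
        continuous_on_poly continuous_on_id)
  then have "(\<lambda>x. poly p x * x powr alpha * jump_factor x * (1 - x) powr (beta - 1))
      integrable_on {0..1}"
    using absolutely_integrable_one_minus_powr[OF beta_pos]
    by (rule integrable_on_continuous_times_absolutely_integrable)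
  then show ?thesis
  proof (rule integrable_eq)
    show "poly p x * x powr alpha * jump_factor x * (1 - x) powr (beta - 1) = poly p x * (w x / (1 - x))"
      if "x \<in> {0..1}" for x
    proof (cases "x = 1")
      case False
      with that show ?thesis by (simp add: wt_eq powr_diff)
    qed simp
  qed
qed

lemmas M_add = moment_add[OF integrable_M]
   and L0_add = moment_add[OF integrable_L0]
   and L1_add = moment_add[OF integrable_L1]

lemma wt_has_log_derivative:
  assumes x: "x \<in> {0<..<1}" "x \<noteq> t"
  shows "(w has_field_derivative w x * (alpha / x - beta / (1 - x) + gamma / (x - t))) (at x)"
proof -
  obtain K s U where U: "open U" "x \<in> U" and s: "0 < s * (x - t)"
    and local_form: "\<And>y. y \<in> U \<Longrightarrow> w y = K * y powr alpha * (1 - y) powr beta * (s * (y - t)) powr gamma"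
  proof (cases "t < x")
    case True
    show ?thesis
      by (rule that[of "{t<..}" 1 "A + B"]) (use True in \<open>auto simp: wt_eq jump_factor_def algebra_simps\<close>)
  next
    case False
    with x have "x < t" by simp
    show ?thesis
      by (rule that[of "{..<t}" "-1" A]) (use \<open>x < t\<close> gamma_pos in \<open>auto simp: wt_eq jump_factor_def algebra_simps\<close>)
  qed
  have "((\<lambda>y. K * y powr alpha * (1 - y) powr beta * (s * (y - t)) powr gamma) has_field_derivative
      w x * (alpha / x - beta / (1 - x) + gamma / (x - t))) (at x)"
    using powr_product_log_deriv[of x s t K alpha beta gamma] x s local_form[OF U(2)] by simp
  then show ?thesis
    by (rule has_field_derivative_transform_within_open[OF _ U]) (simp add: local_form)
qed

lemma moment_ibp:
  "M (pderiv ([:-t, 1:] * T)) + alpha * L0 ([:-t, 1:] * T) - beta * L1 ([:-t, 1:] * T) + gamma * M T = 0"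
proof -
  let ?S = "[:-t, 1:] * T"
  define f where "f x = poly (pderiv ?S) x * w x + alpha * (poly ?S x * (w x / x))
    - beta * (poly ?S x * (w x / (1 - x))) + gamma * (poly T x * w x)" for x
  have "(f has_integral poly ?S 1 * w 1 - poly ?S 0 * w 0) {0..1}"
  proof (rule fundamental_theorem_of_calculus_interior_strong[of "{t}"])
    show "continuous_on {0..1} (\<lambda>x. poly ?S x * w x)"
      by (intro continuous_intros continuous_on_wt)
    show "((\<lambda>x. poly ?S x * w x) has_vector_derivative f x) (at x)" if "x \<in> {0<..<1} - {t}" for x
    proof -
      have "x \<noteq> 0" "x \<noteq> 1" "x \<noteq> t"
        using that by auto
      have "((\<lambda>x. poly ?S x * w x) has_field_derivative
          poly (pderiv ?S) x * w x + w x * (alpha / x - beta / (1 - x) + gamma / (x - t)) * poly ?S x) (at x)"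
        using DERIV_mult[OF poly_DERIV wt_has_log_derivative, of x ?S] that by simp
      then have "((\<lambda>x. poly ?S x * w x) has_field_derivative f x) (at x)"
        by (rule DERIV_cong) (use \<open>x \<noteq> 0\<close> \<open>x \<noteq> 1\<close> \<open>x \<noteq> t\<close> in
          \<open>simp add: f_def divide_simps, simp add: algebra_simps\<close>)
      then show ?thesis
        by (simp add: has_real_derivative_iff_has_vector_derivative)
    qed
  qed auto
  then have "(f has_integral 0) {0..1}"
    by (simp add: wt_0 wt_1)
  moreover have "(f has_integral M (pderiv ?S) + alpha * L0 ?S - beta * L1 ?S + gamma * M T) {0..1}"
    unfolding f_def moment_def
    by (intro has_integral_add has_integral_diff has_integral_mult_right integrable_integral
        integrable_M integrable_L0 integrable_L1)
  ultimately show ?thesis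
    using has_integral_unique by blast
qed

lemma L0_linear_times: "L0 ([:-c, 1:] * S) = M S - c * L0 S"
proof -
  have "L0 ([:0, 1:] * S) = M S"
    unfolding moment_def using alpha_pos by (intro integral_cong) (auto simp: wt_eq)
  moreover have "L0 ([:-c, 1:] * S) = L0 ([:0, 1:] * S) + L0 (smult (- c) S)"
    by (subst L0_add[symmetric]) simp
  moreover have "L0 (smult (- c) S) = - c * L0 S"
    by (rule moment_smult)
  ultimately show ?thesis
    by simp
qed

lemma L1_linear_times: "L1 ([:-c, 1:] * S) = (1 - c) * L1 S - M S"
proof -
  have "poly ([:1, -1:] * S) x * (w x / (1 - x)) = poly S x * w x" for x
  proof (cases "x = 1")
    case True
    then show ?thesis using beta_pos by (simp add: wt_eq)
  next
    case False
    then show ?thesis by (simp add: field_simps)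
  qed
  then have "L1 ([:1, -1:] * S) = M S"
    by (simp add: moment_def)
  moreover have "[:-c, 1:] * S = smult (1 - c) S + smult (- 1) ([:1, -1:] * S)"
    by (simp add: poly_eq_poly_eq_iff[symmetric] fun_eq_iff algebra_simps)
  then have "L1 ([:-c, 1:] * S) = (1 - c) * L1 S - L1 ([:1, -1:] * S)"
    by (simp only: L1_add moment_smult)
  ultimately show ?thesis
    by simp
qed

lemma moment_sq_pos:
  assumes "p \<noteq> 0"
  shows "0 < M (p * p)"
proof -
  obtain c d where "0 \<le> c" "c < d" "d \<le> 1" and pos: "\<And>x. x \<in> {c<..<d} \<Longrightarrow> 0 < w x"
  proof (cases "0 < A")
    case True
    show ?thesis
      by (rule that[of 0 t]) (use t_pos t_less_1 True in \<open>auto simp: wt_def heaviside_def\<close>)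
  next
    case False
    then have "0 < A + B"
      using A_nonneg A_B_nonneg A_B_nonzero by auto
    show ?thesis
      by (rule that[of t 1]) (use t_pos t_less_1 \<open>0 < A + B\<close> in \<open>auto simp: wt_def heaviside_def\<close>)
  qed
  then have "0 < integral {0..1} (\<lambda>x. poly p x * poly p x * w x)"
    using integral_poly_sq_weight_pos[OF continuous_on_wt] wt_nonneg assms by blast
  then show ?thesis
    by (simp add: moment_def)
qed

text \<open>\<open>Lt S\<close> stands for \<open>\<gamma> \<integral> S w / (x - t)\<close>, made sense of by integration by parts.\<close>
definition Lt :: "real poly \<Rightarrow> real" where
  "Lt S = beta * L1 S - alpha * L0 S - M (pderiv S)"

lemma Lt_add: "Lt (S + T) = Lt S + Lt T"
  unfolding Lt_def by (simp add: pderiv_add M_add L0_add L1_add algebra_simps)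

lemma Lt_smult: "Lt (smult c S) = c * Lt S"
  unfolding Lt_def by (simp add: pderiv_smult moment_smult algebra_simps)

lemma Lt_quotient: "Lt ([:-t, 1:] * T) = gamma * M T"
  using moment_ibp[of T] unfolding Lt_def by simp

end

section \<open>The recurrence coefficients\<close>

lemma quadratic_relation_normalize:
  fixes X U V h \<kappa> :: real
  assumes "h \<noteq> 0" "X ^ 2 - U * V = \<kappa> * h * X"
  shows "X / h * (X / h - \<kappa>) = U / h * (V / h)"
proof -
  have "X / h * (X / h - \<kappa>) = (X ^ 2 - \<kappa> * h * X) / h ^ 2"
    using assms(1) by (simp add: field_simps power2_eq_square)
  then show ?thesis
    using assms by (simp add: field_simps power2_eq_square)
qed

text \<open>The identity is \<open>t\<^sup>2\<close> times the first relation, plus \<open>(1 - t)\<^sup>2\<close> times the second,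
  plus \<open>t (1 - t)\<close> times (first + second - third).\<close>
lemma beta_identity_from_quadratics:
  fixes y r z a a' c c' b b' n bn t alpha beta gamma :: real
  assumes y: "y * (y - alpha) = a * a'" and r: "r * (r + beta) = c * c'"
    and z: "z * (z - gamma) = b * b'"
    and b: "b = c - a" and b': "b' = c' - a'" and z_eq: "z = r - y - n"
    and bn: "(alpha + beta + gamma + 2 * n + 1) * bn = t * a + (1 - t) * c"
    and bn_pred: "alpha + beta + gamma + 2 * n - 1 = t * a' + (1 - t) * c'"
  shows "(alpha + beta + gamma + 2 * n + 1) * (alpha + beta + gamma + 2 * n - 1) * bn =
           (t * y - (t - 1) * r) ^ 2 - (t - 1) * (2 * n * t + gamma * t + beta) * r
           + t * ((t - 1) * (2 * n + gamma) - alpha) * y + n * (n + gamma) * (t ^ 2 - t)"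
proof -
  have "(t * y - (t - 1) * r) ^ 2 - (t - 1) * (2 * n * t + gamma * t + beta) * r
           + t * ((t - 1) * (2 * n + gamma) - alpha) * y + n * (n + gamma) * (t ^ 2 - t)
       = t\<^sup>2 * (y * (y - alpha)) + (1 - t)\<^sup>2 * (r * (r + beta))
           + t * (1 - t) * (r * (r + beta) + y * (y - alpha) - z * (z - gamma))"
    unfolding z_eq by (simp add: algebra_simps power2_eq_square)
  also have "\<dots> = t\<^sup>2 * (a * a') + (1 - t)\<^sup>2 * (c * c') + t * (1 - t) * (c * c' + a * a' - (c - a) * (c' - a'))"
    unfolding y r z b b' ..
  also have "\<dots> = (t * a + (1 - t) * c) * (t * a' + (1 - t) * c')"
    by (simp add: algebra_simps power2_eq_square)
  finally show ?thesis
    unfolding bn[symmetric] bn_pred[symmetric] by (simp add: algebra_simps)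
qed

locale jump_weight_OP = jump_weight +
  fixes P :: "nat \<Rightarrow> real poly"
  assumes monic_OP: "monic_OP w P"
begin

sublocale orthogonal_poly_system M P
proof
  show "M (p + q) = M p + M q" for p q
    by (rule M_add)
  show "M (smult c p) = c * M p" for c p
    by (rule moment_smult)
  show "degree (P n) = n" "lead_coeff (P n) = 1" for n
    using monic_OP unfolding monic_OP_def by blast+
  show "M (P m * P n) = 0" if "m \<noteq> n" for m n
    using monic_OP that by (auto simp: monic_OP_def ip_def moment_def mult.assoc)
qed

lemma sqnorm_pos: "0 < sqnorm k"
  using moment_sq_pos[OF P_nonzero] unfolding sqnorm_def .

lemma hn_eq_sqnorm: "hn w P k = sqnorm k"
  unfolding hn_def ip_def sqnorm_def moment_def by (simp add: mult.assoc)

lemma Rn_eq: "Rn beta w P k = beta / sqnorm k * L1 (P k * P k)"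
  unfolding Rn_def hn_eq_sqnorm moment_def by (simp add: power2_eq_square)

lemma yn_eq: "yn alpha w P (Suc m) = alpha / sqnorm m * L0 (P (Suc m) * P m)"
  unfolding yn_def hn_eq_sqnorm moment_def by simp

lemma rn_eq: "rn beta w P (Suc m) = beta / sqnorm m * L1 (P (Suc m) * P m)"
  unfolding rn_def hn_eq_sqnorm moment_def by simp

lemma sqnorm_ibp:
  "(alpha + beta + gamma + 2 * real k + 1) * sqnorm k
     = t * alpha * L0 (P k * P k) + (1 - t) * beta * L1 (P k * P k)"
proof -
  let ?X = "P k * P k"
  have "pderiv ([:-t, 1:] * ?X) = ?X + smult 2 (P k * ([:-t, 1:] * pderiv (P k)))"
    by (simp add: poly_eq_poly_eq_iff[symmetric] fun_eq_iff pderiv_mult pderiv_pCons pderiv_diff pderiv_smult algebra_simps)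
  then have "M (pderiv ([:-t, 1:] * ?X)) = M ?X + 2 * M (P k * ([:-t, 1:] * pderiv (P k)))"
    by (simp only: M_add moment_smult)
  also have "\<dots> = (1 + 2 * real k) * sqnorm k"
    unfolding M_P_linear_times_pderiv_P sqnorm_def by (simp add: algebra_simps)
  finally have "M (pderiv ([:-t, 1:] * ?X)) = (1 + 2 * real k) * sqnorm k" .
  then show ?thesis
    using moment_ibp[of ?X] unfolding L0_linear_times L1_linear_times sqnorm_def[symmetric]
    by (simp add: algebra_simps)
qed

lemma ibp_P_x_P:
  assumes rec: "[:0, 1:] * P (Suc m) = P (Suc (Suc m)) + smult an (P (Suc m)) + smult bn (P m)"
  shows "(alpha + beta + gamma + 2 * real (Suc m) + 2) * an * sqnorm (Suc m)
           = (t + alpha * t - (1 - t) * beta - 2 * coeff (euler_defect t (P (Suc m))) m) * sqnorm (Suc m)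
             + (1 - t) * beta * L1 (P (Suc m) * P (Suc m))"
proof -
  let ?p = "P (Suc m)" and ?W = "euler_defect t (P (Suc m))" and ?h = "sqnorm (Suc m)"
  let ?X = "[:0, 1:] * (?p * ?p)"
  have M_X: "M ?X = an * ?h"
    using M_P_x_P[OF rec] by (simp add: algebra_simps)
  have "M (?p * ([:0, 1:] * ?W)) = coeff ?W m * ?h"
    using M_P_mult_degree_le[of "[:0, 1:] * ?W" "Suc m"] degree_euler_defect[OF degree_P]
    by (simp add: degree_pCons_le)
  with pderiv_linear_times_x_sq[of t ?p, unfolded degree_P] M_X
  have M_pderiv: "M (pderiv ([:-t, 1:] * ?X)) = (2 + 2 * real (Suc m)) * an * ?h - t * ?h + 2 * coeff ?W m * ?h"
    by (simp only: M_add M_diff moment_smult sqnorm_def)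
  have L0_X: "L0 ?X = ?h" and L1_X: "L1 ?X = L1 (?p * ?p) - ?h"
    using L0_linear_times[of 0 "?p * ?p"] L1_linear_times[of 0 "?p * ?p"] by (simp_all add: sqnorm_def)
  have "M (pderiv ([:-t, 1:] * ?X)) + alpha * (M ?X - t * L0 ?X) - beta * ((1 - t) * L1 ?X - M ?X)
      + gamma * M ?X = 0"
    using moment_ibp[of ?X] unfolding L0_linear_times L1_linear_times .
  then show ?thesis
    unfolding M_pderiv M_X L0_X L1_X by (simp add: algebra_simps)
qed

lemma ibp_P_P_pred:
  "coeff (euler_defect t (P (Suc m))) m * sqnorm m
     = t * alpha * L0 (P (Suc m) * P m) + (1 - t) * beta * L1 (P (Suc m) * P m)"
proof -
  let ?p = "P (Suc m)" and ?q = "P m" and ?W = "euler_defect t (P (Suc m))"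
  note pderiv_linear_times_mult[of t ?p ?q, unfolded degree_P]
  moreover have "M (?p * ?q) = 0"
    by (rule orthogonal) simp
  moreover have "M (?p * ([:-t, 1:] * pderiv ?q)) = 0"
    using degree_linear_times_pderiv_le[of t ?q]
    by (intro M_P_mult_lower_degree) (auto simp: degree_P)
  moreover have "M (?q * ?W) = coeff ?W m * sqnorm m"
    by (rule M_P_mult_degree_le) (rule degree_euler_defect[OF degree_P])
  ultimately have "M (pderiv ([:-t, 1:] * (?p * ?q))) = coeff ?W m * sqnorm m"
    by (simp only: M_add moment_smult)
  then show ?thesis
    using moment_ibp[of "?p * ?q"] \<open>M (?p * ?q) = 0\<close> unfolding L0_linear_times L1_linear_times
    by (simp add: algebra_simps)
qed

lemma recurrence_alpha_identity:
  assumes rec: "[:0, 1:] * P (Suc m) = P (Suc (Suc m)) + smult an (P (Suc m)) + smult bn (P m)"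
  shows "(alpha + beta + gamma + 2 * real (Suc m) + 2) * an =
           2 * (t - 1) * rn beta w P (Suc m) - 2 * t * yn alpha w P (Suc m)
           - (t - 1) * Rn beta w P (Suc m) + t * alpha + (t - 1) * beta + t"
proof -
  let ?\<omega> = "coeff (euler_defect t (P (Suc m))) m"
  have "?\<omega> = t * yn alpha w P (Suc m) + (1 - t) * rn beta w P (Suc m)"
    using ibp_P_P_pred[of m] sqnorm_pos[of m] unfolding yn_eq rn_eq by (simp add: field_simps)
  moreover have "(alpha + beta + gamma + 2 * real (Suc m) + 2) * an
      = t + alpha * t - (1 - t) * beta - 2 * ?\<omega> + (1 - t) * Rn beta w P (Suc m)"
    using ibp_P_x_P[OF rec] sqnorm_pos[of "Suc m"] unfolding Rn_eq by (simp add: field_simps)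
  ultimately show ?thesis
    by (simp add: algebra_simps)
qed

lemma recurrence_beta_identity:
  assumes rec: "[:0, 1:] * P (Suc m) = P (Suc (Suc m)) + smult an (P (Suc m)) + smult bn (P m)"
  shows "(alpha + beta + gamma + 2 * real (Suc m) + 1) * (alpha + beta + gamma + 2 * real (Suc m) - 1) * bn =
           (t * yn alpha w P (Suc m) - (t - 1) * rn beta w P (Suc m)) ^ 2
           - (t - 1) * (2 * real (Suc m) * t + gamma * t + beta) * rn beta w P (Suc m)
           + t * ((t - 1) * (2 * real (Suc m) + gamma) - alpha) * yn alpha w P (Suc m)
           + real (Suc m) * (real (Suc m) + gamma) * (t ^ 2 - t)"
proof -
  let ?p = "P (Suc m)" and ?q = "P m" and ?h = "sqnorm m"
  have h: "?h \<noteq> 0"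
    using sqnorm_pos[of m] by simp
  have L0_quadratic: "(alpha * L0 (?p * ?q)) ^ 2 - alpha * L0 (?p * ?p) * (alpha * L0 (?q * ?q))
      = alpha * ?h * (alpha * L0 (?p * ?q))"
    by (rule quotient_functional_quadratic[of "\<lambda>S. alpha * L0 S" 0])
      (use L0_linear_times[of 0] in \<open>simp_all add: L0_add moment_smult algebra_simps\<close>)
  have L1_quadratic: "(- beta * L1 (?p * ?q)) ^ 2 - (- beta * L1 (?p * ?p)) * (- beta * L1 (?q * ?q))
      = beta * ?h * (- beta * L1 (?p * ?q))"
    by (rule quotient_functional_quadratic[of "\<lambda>S. - beta * L1 S" 1])
      (use L1_linear_times[of 1] in \<open>simp_all add: L1_add moment_smult algebra_simps\<close>)
  have Lt_quadratic: "Lt (?p * ?q) ^ 2 - Lt (?p * ?p) * Lt (?q * ?q) = gamma * ?h * Lt (?p * ?q)"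
    by (rule quotient_functional_quadratic[OF Lt_add Lt_smult Lt_quotient])
  show ?thesis
    unfolding yn_eq rn_eq
  proof (rule beta_identity_from_quadratics)
    show "alpha / ?h * L0 (?p * ?q) * (alpha / ?h * L0 (?p * ?q) - alpha)
        = alpha * L0 (?p * ?p) / ?h * (alpha * L0 (?q * ?q) / ?h)"
      using quadratic_relation_normalize[OF h L0_quadratic] by simp
    show "beta / ?h * L1 (?p * ?q) * (beta / ?h * L1 (?p * ?q) + beta)
        = beta * L1 (?p * ?p) / ?h * (beta * L1 (?q * ?q) / ?h)"
      using quadratic_relation_normalize[OF h L1_quadratic] by (simp add: algebra_simps)
    show "Lt (?p * ?q) / ?h * (Lt (?p * ?q) / ?h - gamma) = Lt (?p * ?p) / ?h * (Lt (?q * ?q) / ?h)"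
      by (rule quadratic_relation_normalize[OF h Lt_quadratic])
    show "Lt (?p * ?p) / ?h = beta * L1 (?p * ?p) / ?h - alpha * L0 (?p * ?p) / ?h"
      by (simp add: Lt_def M_pderiv_P_sq diff_divide_distrib)
    show "Lt (?q * ?q) / ?h = beta * L1 (?q * ?q) / ?h - alpha * L0 (?q * ?q) / ?h"
      by (simp add: Lt_def M_pderiv_P_sq diff_divide_distrib)
    show "Lt (?p * ?q) / ?h = beta / ?h * L1 (?p * ?q) - alpha / ?h * L0 (?p * ?q) - real (Suc m)"
      using h unfolding Lt_def M_pderiv_P_P_pred by (simp add: field_simps)
    show "(alpha + beta + gamma + 2 * real (Suc m) + 1) * bn
        = t * (alpha * L0 (?p * ?p) / ?h) + (1 - t) * (beta * L1 (?p * ?p) / ?h)"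
      using sqnorm_ibp[of "Suc m"] h unfolding recurrence_sqnorm[OF rec, symmetric]
      by (simp add: field_simps)
    show "alpha + beta + gamma + 2 * real (Suc m) - 1
        = t * (alpha * L0 (?q * ?q) / ?h) + (1 - t) * (beta * L1 (?q * ?q) / ?h)"
      using sqnorm_ibp[of m] h by (simp add: field_simps)
  qed
qed

end

theorem proposition3p1:
  fixes alpha beta gamma A B t :: real
    and P :: "nat \<Rightarrow> real poly" and n :: nat and an bn :: real
  assumes "alpha > 0" "beta > 0" "gamma > 0"
    and "A \<ge> 0" "A + B \<ge> 0" "\<not> (A = 0 \<and> A + B = 0)"
    and "0 < t" "t < 1"
    and OP: "monic_OP (wt alpha beta gamma A B t) P"
    and "n \<ge> 1"
    and rec: "[:0, 1:] * P n = P (Suc n) + smult an (P n) + smult bn (P (n - 1))"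
  shows "((alpha + beta + gamma + 2 * real n + 2) * an =
           2 * (t - 1) * rn beta (wt alpha beta gamma A B t) P n
           - 2 * t * yn alpha (wt alpha beta gamma A B t) P n
           - (t - 1) * Rn beta (wt alpha beta gamma A B t) P n
           + t * alpha + (t - 1) * beta + t) \<and>
         ((alpha + beta + gamma + 2 * real n + 1) * (alpha + beta + gamma + 2 * real n - 1) * bn =
           (t * yn alpha (wt alpha beta gamma A B t) P n
              - (t - 1) * rn beta (wt alpha beta gamma A B t) P n) ^ 2
           - (t - 1) * (2 * real n * t + gamma * t + beta) * rn beta (wt alpha beta gamma A B t) P n
           + t * ((t - 1) * (2 * real n + gamma) - alpha) * yn alpha (wt alpha beta gamma A B t) P n
           + real n * (real n + gamma) * (t ^ 2 - t))"
proof -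
  interpret jump_weight_OP alpha beta gamma A B t P
    by unfold_locales (use assms in auto)
  obtain m where n: "n = Suc m"
    using \<open>n \<ge> 1\<close> by (cases n) auto
  with rec have "[:0, 1:] * P (Suc m) = P (Suc (Suc m)) + smult an (P (Suc m)) + smult bn (P m)"
    by simp
  from recurrence_alpha_identity[OF this] recurrence_beta_identity[OF this] show ?thesis
    unfolding n by blast
qed

end
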